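(* Let $(f,g,h,X,U)$ be a balanced quintuple with $\operatorname{card}(X)=n\ge1$, and let $x_0\in X$ satisfy $h(x_0)\neq0$. Then there is a neighborhood of $x_0$ on which $f$ coincides with a polynomial of degree at most $n-2$ (where the zero function is regarded as a polynomial of degree $-1$; so for $n=1$ the conclusion is that $f$ vanishes near $x_0$).
   Context: Let $U\subset\mathbb{R}$ be open and $X\subset U$ a finite set with $\operatorname{card}(X)\ge1$. Let $f\colon U\to\mathbb{R}$ be continuous, $g\colon X\to\mathbb{R}$ injective, and $h\colon X\to\mathbb{R}$ arbitrary. The quintuple $(f,g,h,X,U)$ is called balanced if there is $\epsilon>0$ such that $$\sum_{x\in X} h(x)\,f\big(x+s+t\,g(x)\big)=0\quad\text{for all } s,t\in\mathbb{R} \text{ with } |s|,|t|<\epsilon.$$ *)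

theory Defs
  imports "HOL-Analysis.Analysis" "HOL-Computational_Algebra.Polynomial"
begin

definition balanced ::
  "(real \<Rightarrow> real) \<Rightarrow> (real \<Rightarrow> real) \<Rightarrow> (real \<Rightarrow> real) \<Rightarrow> real set \<Rightarrow> real set \<Rightarrow> bool" where
  "balanced f g h X U \<longleftrightarrow>
     open U \<and> finite X \<and> X \<noteq> {} \<and> X \<subseteq> U \<and> continuous_on U f \<and> inj_on g X \<and>
     (\<exists>\<epsilon>>0. \<forall>s t. \<bar>s\<bar> < \<epsilon> \<longrightarrow> \<bar>t\<bar> < \<epsilon> \<longrightarrow>
        (\<Sum>x\<in>X. h x * f (x + s + t * g x)) = 0)"

end

theory Submission
  imports Defs
begin

(* Applying a two-variable difference operator
      with steps (a, b) to the balanced identity  sum_x h x * f (x + s + t * g x) = 0,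
      the summand of x feels the one-variable step a + b * g x.  As g is injective, for every
      x /= x0 one step can be chosen with a + b * g x = 0, killing that summand, while the
      steps felt by x0 remain arbitrary.  Since h x0 /= 0, every (n-1)-fold difference of f
      with small steps vanishes near x0.

   A continuous function whose k-fold
      differences vanish near x0 is a polynomial of degree < k near x0: integrating the
      relation in the step shows f is C^1 (shift_relation_C1), the derivative inherits
      vanishing (k-1)-fold differences, and induction on k concludes. *)

(* Defined over any additive domain, so that the
   same operator serves for functions of one real variable and of a pair (s, t). *)
fun fdiff :: "'a::plus list \<Rightarrow> ('a \<Rightarrow> 'b::minus) \<Rightarrow> 'a \<Rightarrow> 'b" where
  "fdiff [] f y = f y"
| "fdiff (d # ds) f y = fdiff ds f (y + d) - fdiff ds f y"

lemma fdiff_zero_step: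
  fixes f :: "'a::monoid_add \<Rightarrow> 'b::group_add"
  shows "0 \<in> set ds \<Longrightarrow> fdiff ds f y = 0"
  by (induction ds arbitrary: y) auto

lemma fdiff_shift:
  fixes f :: "'a::semigroup_add \<Rightarrow> 'b::minus"
  shows "fdiff ds (\<lambda>z. f (c + z)) y = fdiff ds f (c + y)"
  by (induction ds arbitrary: y) (simp_all add: add.assoc)

lemma fdiff_compose_additive:
  assumes "\<And>a b. L (a + b) = L a + L b"
  shows "fdiff ds (\<lambda>z. f (L z)) y = fdiff (map L ds) f (L y)"
  by (induction ds arbitrary: y) (simp_all add: assms)

lemma fdiff_weighted_sum:
  fixes c :: "'i \<Rightarrow> 'b::ring"
  shows "fdiff ds (\<lambda>y. \<Sum>x\<in>X. c x * W x y) y = (\<Sum>x\<in>X. c x * fdiff ds (W x) y)"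
  by (induction ds arbitrary: y) (simp_all add: sum_subtractf right_diff_distrib)

lemma fdiff_vanishing:
  fixes f :: "'a::real_normed_vector \<Rightarrow> 'b::group_add"
  assumes "\<And>z. z \<in> ball c R \<Longrightarrow> f z = 0"
  shows "dist c y + (\<Sum>d\<leftarrow>ds. norm d) < R \<Longrightarrow> fdiff ds f y = 0"
proof (induction ds arbitrary: y)
  case Nil
  then show ?case using assms by simp
next
  case (Cons d ds)
  have "dist c (y + d) \<le> dist c y + norm d"
    by (metis dist_norm dist_triangle2 norm_minus_commute add_diff_cancel_left')
  moreover have "dist c y + norm d + (\<Sum>d\<leftarrow>ds. norm d) < R"
    using Cons.prems by (simp add: add.assoc)
  ultimately have "fdiff ds f (y + d) = 0" and "fdiff ds f y = 0"
    using norm_ge_zero[of d] by (intro Cons.IH; linarith)+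
  then show ?case by simp
qed

lemma fdiff_has_derivative:
  assumes "\<And>z. z \<in> ball c R \<Longrightarrow> (f has_real_derivative f' z) (at z)"
  shows "dist c y + (\<Sum>d\<leftarrow>ds. \<bar>d\<bar>) < R \<Longrightarrow>
    (fdiff ds f has_real_derivative fdiff ds f' y) (at y)"
proof (induction ds arbitrary: y)
  case Nil
  then show ?case using assms by simp
next
  case (Cons d ds)
  have "dist c (y + d) \<le> dist c y + \<bar>d\<bar>" by (simp add: dist_real_def)
  with Cons.prems have "(fdiff ds f has_real_derivative fdiff ds f' (y + d)) (at (y + d))"
    and "(fdiff ds f has_real_derivative fdiff ds f' y) (at y)"
    by (auto intro!: Cons.IH)
  then have "((\<lambda>z. fdiff ds f (z + d) - fdiff ds f z) has_real_derivative
      fdiff ds f' (y + d) - fdiff ds f' y) (at y)"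
    by (intro DERIV_diff) (simp_all add: DERIV_shift)
  then show ?case by (simp add: fun_diff_def)
qed

lemma fdiff_replicate:
  "\<exists>b::nat \<Rightarrow> real. b 0 \<noteq> 0 \<and>
     (\<forall>f y h. fdiff (replicate m h) f y = (\<Sum>j\<le>m. b j * f (y + real j * h)))"
proof (induction m)
  case 0
  show ?case by (intro exI[of _ "\<lambda>_. 1"]) simp
next
  case (Suc m)
  then obtain b :: "nat \<Rightarrow> real" where b0: "b 0 \<noteq> 0"
    and b: "\<And>f y h. fdiff (replicate m h) f y = (\<Sum>j\<le>m. b j * f (y + real j * h))"
    by blast
  define b' where "b' j = (if j = 0 then 0 else b (j - 1)) - (if j \<le> m then b j else 0)" for j
  have "fdiff (replicate (Suc m) h) f y = (\<Sum>j\<le>Suc m. b' j * f (y + real j * h))" for f y h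
  proof -
    have shifted: "(\<Sum>j\<le>Suc m. (if j = 0 then 0 else b (j - 1)) * f (y + real j * h))
        = (\<Sum>j\<le>m. b j * f (y + h + real j * h))"
      by (subst sum.atMost_Suc_shift) (simp add: algebra_simps)
    have unshifted: "(\<Sum>j\<le>Suc m. (if j \<le> m then b j else 0) * f (y + real j * h))
        = (\<Sum>j\<le>m. b j * f (y + real j * h))"
      by (simp add: sum.atMost_Suc)
    show ?thesis
      unfolding b'_def left_diff_distrib sum_subtractf shifted unshifted by (simp add: b)
  qed
  moreover have "b' 0 \<noteq> 0" using b0 by (simp add: b'_def)
  ultimately show ?case by blast
qed

(* Key algebraic step: apply the two-variable difference with steps ds to the balanced
   identity.  The summand of x sees the one-variable steps fst d + snd d * g x; if some step
   annihilates each x other than x0, only the x0-summand survives. *)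
lemma balanced_sum_difference:
  fixes f g h :: "real \<Rightarrow> real" and ds :: "(real \<times> real) list"
  assumes "finite X" "x0 \<in> X"
    and vanish: "\<And>s t. \<bar>s\<bar> < \<epsilon> \<Longrightarrow> \<bar>t\<bar> < \<epsilon> \<Longrightarrow> (\<Sum>x\<in>X. h x * f (x + s + t * g x)) = 0"
    and kill: "\<forall>x\<in>X - {x0}. \<exists>d\<in>set ds. fst d + snd d * g x = 0"
    and small: "\<bar>u\<bar> + (\<Sum>d\<leftarrow>ds. norm d) < \<epsilon>"
  shows "h x0 * fdiff (map (\<lambda>d. fst d + snd d * g x0) ds) f (x0 + u) = 0"
proof -
  define L where "L x d = fst d + snd d * g x" for x and d :: "real \<times> real"
  have L_additive: "L x (a + b) = L x a + L x b" for x a b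
    by (simp add: L_def algebra_simps)
  define \<Phi> where "\<Phi> p = (\<Sum>x\<in>X. h x * f (x + L x p))" for p
  have "\<Phi> p = 0" if "p \<in> ball 0 \<epsilon>" for p
  proof -
    have "\<bar>fst p\<bar> < \<epsilon>" "\<bar>snd p\<bar> < \<epsilon>"
      using that norm_fst_le[of "fst p" "snd p"] norm_snd_le[of "snd p" "fst p"] by auto
    then show ?thesis using vanish by (simp add: \<Phi>_def L_def add.assoc)
  qed
  then have "fdiff ds \<Phi> (u, 0) = 0"
    by (rule fdiff_vanishing[where c = 0 and R = \<epsilon>]) (use small in simp_all)
  also have "fdiff ds \<Phi> (u, 0)
      = (\<Sum>x\<in>X. h x * fdiff (map (L x) ds) (\<lambda>z. f (x + z)) (L x (u, 0)))"
    unfolding \<Phi>_def fdiff_weighted_sum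
  proof (rule sum.cong[OF refl])
    fix x
    show "h x * fdiff ds (\<lambda>p. f (x + L x p)) (u, 0)
        = h x * fdiff (map (L x) ds) (\<lambda>z. f (x + z)) (L x (u, 0))"
      using fdiff_compose_additive[of "L x" ds "\<lambda>z. f (x + z)"] L_additive by simp
  qed
  also have "\<dots> = h x0 * fdiff (map (L x0) ds) (\<lambda>z. f (x0 + z)) (L x0 (u, 0))"
  proof -
    have "fdiff (map (L x) ds) (\<lambda>z. f (x + z)) (L x (u, 0)) = 0" if "x \<in> X - {x0}" for x
      using kill that by (force simp: L_def intro: fdiff_zero_step)
    then show ?thesis by (simp add: sum.remove[OF assms(1,2)])
  qed
  finally show ?thesis by (simp add: fdiff_shift L_def[abs_def])
qed

(* The step for x /= x0 and e is a multiple of (-g x, 1). *)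
lemma killing_steps:
  fixes g :: "real \<Rightarrow> real"
  assumes "finite X" "x0 \<in> X" "inj_on g X"
  obtains M where "0 \<le> M"
    and "\<And>es. length es = card X - 1 \<Longrightarrow> \<exists>ds.
           map (\<lambda>d. fst d + snd d * g x0) ds = es \<and>
           (\<forall>x\<in>X - {x0}. \<exists>d\<in>set ds. fst d + snd d * g x = 0) \<and>
           (\<Sum>d\<leftarrow>ds. norm d) \<le> M * (\<Sum>e\<leftarrow>es. \<bar>e\<bar>)"
proof -
  obtain xs where set_xs: "set xs = X - {x0}" and "distinct xs"
    using finite_distinct_list[of "X - {x0}"] assms(1) by blast
  then have len_xs: "length xs = card X - 1"
    using assms(1,2) by (metis card_Diff_singleton distinct_card)
  have gap: "g x0 - g x \<noteq> 0" if "x \<in> X - {x0}" for x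
    using that assms(2,3) by (auto simp: inj_on_def)
  define step where "step x e = (e / (g x0 - g x)) *\<^sub>R (- g x, 1 :: real)" for x e
  define K where "K x = norm (- g x, 1 :: real) / \<bar>g x0 - g x\<bar>" for x
  define M where "M = Max (insert 0 (K ` (X - {x0})))"
  have "0 \<le> M" unfolding M_def using assms(1) by (intro Max_ge) auto
  have K_le_M: "K x \<le> M" if "x \<in> X - {x0}" for x
    unfolding M_def using assms(1) that by (intro Max_ge) auto
  have step_at_x0: "fst (step x e) + snd (step x e) * g x0 = e" if "x \<in> X - {x0}" for x e
  proof -
    have "fst (step x e) + snd (step x e) * g x0 = e / (g x0 - g x) * (g x0 - g x)"
      by (simp add: step_def algebra_simps add_divide_distrib [symmetric])
    then show ?thesis using gap[OF that] by simp
  qed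
  have step_at_x: "fst (step x e) + snd (step x e) * g x = 0" for x e
    by (simp add: step_def)
  have step_norm: "norm (step x e) \<le> M * \<bar>e\<bar>" if "x \<in> X - {x0}" for x e
  proof -
    have "norm (step x e) = \<bar>e\<bar> * K x"
      by (simp only: step_def K_def norm_scaleR abs_divide real_norm_def
          times_divide_eq_left times_divide_eq_right)
    also have "\<dots> \<le> \<bar>e\<bar> * M" using K_le_M[OF that] by (simp add: mult_left_mono)
    finally show ?thesis by (simp add: mult.commute)
  qed
  have "\<exists>ds. map (\<lambda>d. fst d + snd d * g x0) ds = es \<and>
           (\<forall>x\<in>X - {x0}. \<exists>d\<in>set ds. fst d + snd d * g x = 0) \<and>
           (\<Sum>d\<leftarrow>ds. norm d) \<le> M * (\<Sum>e\<leftarrow>es. \<bar>e\<bar>)"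
    if len_es: "length es = card X - 1" for es
  proof (intro exI conjI)
    let ?ds = "map (\<lambda>(x, e). step x e) (zip xs es)"
    have "map (\<lambda>d. fst d + snd d * g x0) ?ds = map snd (zip xs es)"
      unfolding map_map
    proof (rule map_cong[OF refl])
      fix p assume "p \<in> set (zip xs es)"
      then have "fst p \<in> X - {x0}"
        using set_xs by (metis prod.collapse set_zip_leftD)
      then show "((\<lambda>d. fst d + snd d * g x0) \<circ> (\<lambda>(x, e). step x e)) p = snd p"
        by (simp add: step_at_x0 case_prod_beta)
    qed
    then show "map (\<lambda>d. fst d + snd d * g x0) ?ds = es"
      using len_es len_xs by simp
    show "\<forall>x\<in>X - {x0}. \<exists>d\<in>set ?ds. fst d + snd d * g x = 0"
    proof
      fix x assume "x \<in> X - {x0}"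
      then obtain i where "i < length xs" "xs ! i = x"
        using set_xs by (metis in_set_conv_nth)
      then have "(x, es ! i) \<in> set (zip xs es)"
        using len_es len_xs by (auto simp: in_set_zip)
      then show "\<exists>d\<in>set ?ds. fst d + snd d * g x = 0"
        using step_at_x by force
    qed
    have "(\<Sum>d\<leftarrow>?ds. norm d) = (\<Sum>p\<leftarrow>zip xs es. norm (step (fst p) (snd p)))"
      by (simp add: case_prod_beta' comp_def)
    also have "\<dots> \<le> (\<Sum>p\<leftarrow>zip xs es. M * \<bar>snd p\<bar>)"
      using set_xs by (intro sum_list_mono step_norm) (metis prod.collapse set_zip_leftD)
    also have "\<dots> = (\<Sum>e\<leftarrow>map snd (zip xs es). M * \<bar>e\<bar>)"
      by (simp add: comp_def)
    also have "\<dots> = M * (\<Sum>e\<leftarrow>es. \<bar>e\<bar>)"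
      using len_es len_xs by (simp add: sum_list_const_mult)
    finally show "(\<Sum>d\<leftarrow>?ds. norm d) \<le> M * (\<Sum>e\<leftarrow>es. \<bar>e\<bar>)" .
  qed
  with \<open>0 \<le> M\<close> show ?thesis using that by blast
qed

lemma balanced_differences_vanish:
  assumes bal: "balanced f g h X U" and x0: "x0 \<in> X" and "h x0 \<noteq> 0"
  obtains r where "r > 0" "ball x0 r \<subseteq> U"
    and "\<And>y es. length es = card X - 1 \<Longrightarrow> dist x0 y + (\<Sum>e\<leftarrow>es. \<bar>e\<bar>) < r \<Longrightarrow>
           fdiff es f y = 0"
proof -
  have "open U" "finite X" "X \<subseteq> U" "inj_on g X"
    using bal by (simp_all add: balanced_def)
  obtain \<epsilon> where "\<epsilon> > 0" and vanish:
    "\<And>s t. \<bar>s\<bar> < \<epsilon> \<Longrightarrow> \<bar>t\<bar> < \<epsilon> \<Longrightarrow> (\<Sum>x\<in>X. h x * f (x + s + t * g x)) = 0"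
    using bal by (auto simp: balanced_def)
  obtain M where "0 \<le> M" and steps: "\<And>es. length es = card X - 1 \<Longrightarrow> \<exists>ds.
           map (\<lambda>d. fst d + snd d * g x0) ds = es \<and>
           (\<forall>x\<in>X - {x0}. \<exists>d\<in>set ds. fst d + snd d * g x = 0) \<and>
           (\<Sum>d\<leftarrow>ds. norm d) \<le> M * (\<Sum>e\<leftarrow>es. \<bar>e\<bar>)"
    using killing_steps[OF \<open>finite X\<close> x0 \<open>inj_on g X\<close>] by blast
  obtain R where "R > 0" "ball x0 R \<subseteq> U"
    using \<open>open U\<close> \<open>X \<subseteq> U\<close> x0 open_contains_ball by blast
  define r where "r = min R (\<epsilon> / (1 + M))"
  have "r > 0" using \<open>R > 0\<close> \<open>\<epsilon> > 0\<close> \<open>0 \<le> M\<close> by (simp add: r_def)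
  have "fdiff es f y = 0"
    if len: "length es = card X - 1" and close: "dist x0 y + (\<Sum>e\<leftarrow>es. \<bar>e\<bar>) < r" for y es
  proof -
    obtain ds where map_ds: "map (\<lambda>d. fst d + snd d * g x0) ds = es"
      and kill: "\<forall>x\<in>X - {x0}. \<exists>d\<in>set ds. fst d + snd d * g x = 0"
      and bound: "(\<Sum>d\<leftarrow>ds. norm d) \<le> M * (\<Sum>e\<leftarrow>es. \<bar>e\<bar>)"
      using steps[OF len] by blast
    have "0 \<le> (\<Sum>e\<leftarrow>es. \<bar>e\<bar>)" by (induction es) auto
    moreover have "0 \<le> M * dist x0 y" using \<open>0 \<le> M\<close> by simp
    moreover have "\<bar>y - x0\<bar> = dist x0 y" by (metis dist_real_def abs_minus_commute)
    moreover have "(1 + M) * (dist x0 y + (\<Sum>e\<leftarrow>es. \<bar>e\<bar>))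
        = dist x0 y + M * (\<Sum>e\<leftarrow>es. \<bar>e\<bar>) + ((\<Sum>e\<leftarrow>es. \<bar>e\<bar>) + M * dist x0 y)"
      by (simp add: algebra_simps)
    ultimately have "\<bar>y - x0\<bar> + (\<Sum>d\<leftarrow>ds. norm d) \<le> (1 + M) * (dist x0 y + (\<Sum>e\<leftarrow>es. \<bar>e\<bar>))"
      using bound by linarith
    also have "\<dots> < (1 + M) * (\<epsilon> / (1 + M))"
      using close \<open>0 \<le> M\<close> by (intro mult_strict_left_mono) (auto simp: r_def)
    also have "\<dots> = \<epsilon>" using \<open>0 \<le> M\<close> by simp
    finally have "h x0 * fdiff es f (x0 + (y - x0)) = 0"
      using balanced_sum_difference[OF \<open>finite X\<close> x0 vanish kill] map_ds by blast
    then show ?thesis using \<open>h x0 \<noteq> 0\<close> by simp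
  qed
  moreover have "ball x0 r \<subseteq> U"
    using \<open>ball x0 R \<subseteq> U\<close> subset_ball[of r R x0] by (simp add: r_def)
  ultimately show ?thesis using that \<open>r > 0\<close> by blast
qed

lemma antiderivative_on_ball:
  fixes f :: "real \<Rightarrow> real"
  assumes "0 < r" and "continuous_on (ball x0 r) f"
  obtains F where "\<And>z. z \<in> ball x0 (r / 2) \<Longrightarrow> (F has_real_derivative f z) (at z)"
proof -
  define F where "F z = integral {x0 - r / 2..z} f" for z
  have cont: "continuous_on {x0 - r / 2..x0 + r / 2} f"
    using assms(2) by (rule continuous_on_subset)
      (use \<open>0 < r\<close> in \<open>auto simp: dist_real_def abs_less_iff\<close>)
  have "(F has_real_derivative f z) (at z)" if "z \<in> ball x0 (r / 2)" for z
  proof -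
    have "z \<in> interior {x0 - r / 2..x0 + r / 2}"
      using that by (auto simp: dist_real_def abs_if split: if_splits)
    moreover have "(F has_real_derivative f z) (at z within {x0 - r / 2..x0 + r / 2})"
      unfolding F_def using integral_has_real_derivative[OF cont] calculation interior_subset
      by blast
    ultimately show ?thesis by (metis at_within_interior)
  qed
  then show ?thesis using that by blast
qed

(* Integrating a shift relation sum_j b_j f (y + j h) = 0 over h in [0, a] expresses
   b_0 a f y through values of an antiderivative F at the points y + j a. *)
lemma integrated_shift_relation:
  fixes f F :: "real \<Rightarrow> real" and b :: "nat \<Rightarrow> real"
  assumes F: "\<And>z. z \<in> S \<Longrightarrow> (F has_real_derivative f z) (at z)"
    and in_S: "\<And>j h. j \<le> m \<Longrightarrow> 0 \<le> h \<Longrightarrow> h \<le> a \<Longrightarrow> y + real j * h \<in> S"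
    and rel: "\<And>h. 0 \<le> h \<Longrightarrow> h \<le> a \<Longrightarrow> (\<Sum>j\<le>m. b j * f (y + real j * h)) = 0"
    and "0 \<le> a"
  shows "b 0 * (a * f y) + (\<Sum>j\<in>{1..m}. b j * ((F (y + real j * a) - F y) / real j)) = 0"
proof -
  define K where
    "K h = (\<Sum>j\<le>m. b j * (if j = 0 then h * f y else F (y + real j * h) / real j))" for h
  have "(K has_real_derivative (\<Sum>j\<le>m. b j * f (y + real j * h))) (at h)"
    if h: "0 \<le> h" "h \<le> a" for h
    unfolding K_def
  proof (rule DERIV_sum)
    fix j assume j: "j \<in> {..m}"
    show "((\<lambda>h. b j * (if j = 0 then h * f y else F (y + real j * h) / real j))
        has_real_derivative b j * f (y + real j * h)) (at h)"
    proof (cases "j = 0")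
      case True
      then show ?thesis by (auto intro!: derivative_eq_intros)
    next
      case False
      have "(F has_real_derivative f (y + real j * h)) (at (y + real j * h))"
        using F in_S j h by simp
      then have "((\<lambda>h. F (y + real j * h)) has_real_derivative f (y + real j * h) * real j) (at h)"
        by (rule DERIV_chain2) (auto intro!: derivative_eq_intros)
      then show ?thesis
        using False by (auto intro!: derivative_eq_intros)
    qed
  qed
  then have "(K has_real_derivative 0) (at h within {0..a})" if "h \<in> {0..a}" for h
    using rel that by (simp add: has_field_derivative_at_within)
  then have "K a - K 0 = 0"
    using has_field_derivative_zero_constant[of "{0..a}" K] \<open>0 \<le> a\<close> by fastforce
  moreover have "K a - K 0
      = (\<Sum>j\<le>m. b j * (if j = 0 then a * f y else (F (y + real j * a) - F y) / real j))"
    unfolding K_def sum_subtractf[symmetric]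
    by (intro sum.cong) (auto simp: algebra_simps diff_divide_distrib)
  moreover have "{..m} = insert 0 {1..m}" by auto
  ultimately show ?thesis by simp
qed

lemma translates_of_antiderivative_C1:
  fixes f F :: "real \<Rightarrow> real" and w s :: "'i \<Rightarrow> real"
  assumes F: "\<And>z. z \<in> ball x0 R \<Longrightarrow> (F has_real_derivative f z) (at z)"
    and cont: "continuous_on (ball x0 R) f" and "\<rho> \<le> R"
    and shifts: "\<And>j y. j \<in> J \<Longrightarrow> y \<in> ball x0 \<rho> \<Longrightarrow> y + s j \<in> ball x0 R"
    and f_eq: "\<And>y. y \<in> ball x0 \<rho> \<Longrightarrow> f y = (\<Sum>j\<in>J. w j * (F (y + s j) - F y))"
  shows "continuous_on (ball x0 \<rho>) (\<lambda>y. \<Sum>j\<in>J. w j * (f (y + s j) - f y))"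
    and "\<And>y. y \<in> ball x0 \<rho> \<Longrightarrow>
           (f has_real_derivative (\<Sum>j\<in>J. w j * (f (y + s j) - f y))) (at y)"
proof -
  have ball_\<rho>: "ball x0 \<rho> \<subseteq> ball x0 R" using \<open>\<rho> \<le> R\<close> by (simp add: subset_ball)
  have "continuous_on (ball x0 \<rho>) (\<lambda>y. f (y + s j))" if "j \<in> J" for j
    by (intro continuous_on_compose2[OF cont] continuous_intros image_subsetI shifts that)
  then show "continuous_on (ball x0 \<rho>) (\<lambda>y. \<Sum>j\<in>J. w j * (f (y + s j) - f y))"
    using continuous_on_subset[OF cont ball_\<rho>] by (intro continuous_intros)
  fix y assume y: "y \<in> ball x0 \<rho>"
  have "((\<lambda>y. \<Sum>j\<in>J. w j * (F (y + s j) - F y)) has_real_derivative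
      (\<Sum>j\<in>J. w j * (f (y + s j) - f y))) (at y)"
  proof (intro DERIV_sum DERIV_cmult DERIV_diff)
    fix j assume "j \<in> J"
    then show "((\<lambda>y. F (y + s j)) has_real_derivative f (y + s j)) (at y)"
      using F[OF shifts[OF _ y]] by (simp add: DERIV_shift)
    show "(F has_real_derivative f y) (at y)" using F y ball_\<rho> by blast
  qed
  then show "(f has_real_derivative (\<Sum>j\<in>J. w j * (f (y + s j) - f y))) (at y)"
    using has_field_derivative_transform_within_open[OF _ open_ball y] f_eq by simp
qed

(* Regularity: a continuous f satisfying a shift relation with b_0 /= 0 for all small steps
   equals, near x0, a combination of increments of its antiderivative (integrate the
   relation in the step); hence it is continuously differentiable near x0. *)
lemma shift_relation_C1:
  fixes f :: "real \<Rightarrow> real" and b :: "nat \<Rightarrow> real"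
  assumes "0 < r" and cont: "continuous_on (ball x0 r) f" and "b 0 \<noteq> 0"
    and rel: "\<And>y h. 0 \<le> h \<Longrightarrow> dist x0 y + real m * h < r \<Longrightarrow>
                (\<Sum>j\<le>m. b j * f (y + real j * h)) = 0"
  obtains \<rho> f' where "0 < \<rho>" "\<rho> \<le> r" "continuous_on (ball x0 \<rho>) f'"
    and "\<And>y. y \<in> ball x0 \<rho> \<Longrightarrow> (f has_real_derivative f' y) (at y)"
proof -
  obtain F where F: "\<And>z. z \<in> ball x0 (r / 2) \<Longrightarrow> (F has_real_derivative f z) (at z)"
    using antiderivative_on_ball[OF \<open>0 < r\<close> cont] by blast
  define \<rho> where "\<rho> = r / 4"
  define a where "a = r / (4 * (real m + 1))"
  have "0 < a" using \<open>0 < r\<close> by (simp add: a_def add_pos_nonneg)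
  have ma: "real m * a \<le> r / 4"
    using \<open>0 < r\<close> by (simp add: a_def field_simps)
  have near: "y + real j * h \<in> ball x0 (r / 2)"
    if "y \<in> ball x0 \<rho>" "j \<le> m" "0 \<le> h" "h \<le> a" for y j h
  proof -
    have "real j * h \<le> real m * a" using that by (intro mult_mono) auto
    moreover have "dist x0 (y + real j * h) \<le> dist x0 y + \<bar>real j * h\<bar>"
      by (simp add: dist_real_def)
    moreover have "dist x0 y < r / 4" using that(1) by (simp add: \<rho>_def)
    ultimately show ?thesis using that(3) ma by simp
  qed
  define w where "w j = - (b j / (real j * (b 0 * a)))" for j
  have f_eq: "f y = (\<Sum>j\<in>{1..m}. w j * (F (y + real j * a) - F y))"
    if y: "y \<in> ball x0 \<rho>" for y
  proof -
    have "b 0 * (a * f y) + (\<Sum>j\<in>{1..m}. b j * ((F (y + real j * a) - F y) / real j)) = 0"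
    proof (rule integrated_shift_relation[OF F near[OF y] rel])
      fix h :: real assume "0 \<le> h" "h \<le> a"
      then have "real m * h \<le> r / 4"
        using ma by (meson mult_left_mono of_nat_0_le_iff order_trans)
      then show "dist x0 y + real m * h < r" using y \<open>0 < r\<close> by (simp add: \<rho>_def)
    qed (use \<open>0 < a\<close> in auto)
    then have "f y = - (\<Sum>j\<in>{1..m}. b j * ((F (y + real j * a) - F y) / real j)) / (b 0 * a)"
      using \<open>b 0 \<noteq> 0\<close> \<open>0 < a\<close> by (simp add: field_simps)
    also have "\<dots> = (\<Sum>j\<in>{1..m}. w j * (F (y + real j * a) - F y))"
      by (simp add: w_def sum_negf sum_divide_distrib)
    finally show ?thesis .
  qed
  have half: "ball x0 (r / 2) \<subseteq> ball x0 r" and "\<rho> \<le> r / 2"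
    using \<open>0 < r\<close> by (simp_all add: \<rho>_def subset_ball)
  have "y + real j * a \<in> ball x0 (r / 2)" if "j \<in> {1..m}" "y \<in> ball x0 \<rho>" for j y
    using near that \<open>0 < a\<close> by simp
  note C1 = translates_of_antiderivative_C1[where s = "\<lambda>j. real j * a",
      OF F continuous_on_subset[OF cont half] \<open>\<rho> \<le> r / 2\<close> this f_eq]
  have "0 < \<rho>" "\<rho> \<le> r" using \<open>0 < r\<close> by (simp_all add: \<rho>_def)
  then show ?thesis using that C1 by blast
qed

lemma polynomial_antiderivative:
  fixes f :: "real \<Rightarrow> real"
  assumes "\<And>y. y \<in> ball x0 e \<Longrightarrow> (f has_real_derivative (\<Sum>i<k. c i * y ^ i)) (at y)"
  shows "\<exists>c'. \<forall>y\<in>ball x0 e. f y = (\<Sum>i<Suc k. c' i * y ^ i)"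
proof -
  define P where "P y = (\<Sum>i<k. c i * y ^ Suc i / real (Suc i))" for y
  have P_deriv: "(P has_real_derivative (\<Sum>i<k. c i * y ^ i)) (at y)" for y
    unfolding P_def
  proof (rule DERIV_sum)
    fix i
    have "((\<lambda>y. y ^ Suc i) has_real_derivative real (Suc i) * y ^ i) (at y)"
      using DERIV_pow[of "Suc i" y] by simp
    then have "((\<lambda>y. c i * y ^ Suc i / real (Suc i)) has_real_derivative
        c i * (real (Suc i) * y ^ i) / real (Suc i)) (at y)"
      by (intro DERIV_cdivide DERIV_cmult)
    then show "((\<lambda>y. c i * y ^ Suc i / real (Suc i)) has_real_derivative c i * y ^ i) (at y)"
      by (simp del: of_nat_Suc)
  qed
  have "((\<lambda>y. f y - P y) has_real_derivative 0) (at y within ball x0 e)"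
    if "y \<in> ball x0 e" for y
    using DERIV_diff[OF assms[OF that] P_deriv] by (simp add: has_field_derivative_at_within)
  then have "\<exists>C. \<forall>y\<in>ball x0 e. f y - P y = C"
    by (rule has_field_derivative_zero_constant[OF convex_ball])
  then obtain C where C: "\<And>y. y \<in> ball x0 e \<Longrightarrow> f y - P y = C" by blast
  define c' where "c' i = (if i = 0 then C else c (i - 1) / real i)" for i
  have "f y = (\<Sum>i<Suc k. c' i * y ^ i)" if "y \<in> ball x0 e" for y
  proof -
    have "(\<Sum>i<Suc k. c' i * y ^ i) = C + P y"
      unfolding P_def by (subst sum.lessThan_Suc_shift) (simp add: c'_def del: of_nat_Suc)
    then show ?thesis using C[OF that] by simp
  qed
  then show ?thesis by blast
qed

(* If the (k+1)-fold differences of f vanish, then the k-fold differences of f' vanish: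
   the k-fold difference of f is locally constant, and its derivative is the k-fold
   difference of f'. *)
lemma derivative_differences_vanish:
  fixes f f' :: "real \<Rightarrow> real"
  assumes hyp: "\<And>y es. length es = Suc k \<Longrightarrow> dist x0 y + (\<Sum>e\<leftarrow>es. \<bar>e\<bar>) < r \<Longrightarrow>
                  fdiff es f y = 0"
    and deriv: "\<And>y. y \<in> ball x0 \<rho> \<Longrightarrow> (f has_real_derivative f' y) (at y)"
    and "\<rho> \<le> r" and len: "length es = k" and close: "dist x0 y + (\<Sum>e\<leftarrow>es. \<bar>e\<bar>) < \<rho>"
  shows "fdiff es f' y = 0"
proof -
  have "(fdiff es f has_real_derivative fdiff es f' y) (at y)"
    using fdiff_has_derivative[OF deriv close] .
  moreover have "(fdiff es f has_real_derivative 0) (at y)"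
  proof -
    define \<delta> where "\<delta> = r - (dist x0 y + (\<Sum>e\<leftarrow>es. \<bar>e\<bar>))"
    have "0 < \<delta>" using close \<open>\<rho> \<le> r\<close> by (simp add: \<delta>_def)
    have "fdiff es f z = fdiff es f y" if "z \<in> ball y \<delta>" for z
    proof -
      have "dist x0 y + (\<Sum>e\<leftarrow>(z - y) # es. \<bar>e\<bar>) < r"
        using that by (simp add: \<delta>_def dist_real_def abs_minus_commute)
      then have "fdiff ((z - y) # es) f y = 0" using hyp[of "(z - y) # es" y] len by simp
      then show ?thesis by simp
    qed
    then show ?thesis
      using has_field_derivative_transform_within_open[OF DERIV_const open_ball] \<open>0 < \<delta>\<close>
      by (metis centre_in_ball)
  qed
  ultimately show ?thesis by (rule DERIV_unique)
qed

lemma vanishing_differences_polynomial: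
  fixes f :: "real \<Rightarrow> real"
  assumes "0 < r" and "continuous_on (ball x0 r) f"
    and "\<And>y es. length es = k \<Longrightarrow> dist x0 y + (\<Sum>e\<leftarrow>es. \<bar>e\<bar>) < r \<Longrightarrow> fdiff es f y = 0"
  obtains c e where "0 < e" and "\<And>y. y \<in> ball x0 e \<Longrightarrow> f y = (\<Sum>i<k. c i * y ^ i)"
  using assms
proof (induction k arbitrary: f r thesis)
  case 0
  show ?case
  proof (rule "0.prems"(1)[OF "0.prems"(2)])
    fix y assume "y \<in> ball x0 r"
    then show "f y = (\<Sum>i<0. 0 * y ^ i)" using "0.prems"(4)[of "[]" y] by simp
  qed
next
  case (Suc k)
  note hyp = Suc.prems(4)
  obtain b :: "nat \<Rightarrow> real" where "b 0 \<noteq> 0"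
    and b: "\<And>f y h. fdiff (replicate (Suc k) h) f y = (\<Sum>j\<le>Suc k. b j * f (y + real j * h))"
    using fdiff_replicate by blast
  have "(\<Sum>j\<le>Suc k. b j * f (y + real j * h)) = 0"
    if "0 \<le> h" "dist x0 y + real (Suc k) * h < r" for y h
  proof -
    have "(\<Sum>e\<leftarrow>replicate (Suc k) h. \<bar>e\<bar>) = real (Suc k) * h"
      using \<open>0 \<le> h\<close> by (simp add: sum_list_replicate del: replicate_Suc)
    then have "fdiff (replicate (Suc k) h) f y = 0"
      using that by (intro hyp) (simp_all del: replicate_Suc)
    then show ?thesis by (metis b)
  qed
  then obtain \<rho> f' where "0 < \<rho>" "\<rho> \<le> r" "continuous_on (ball x0 \<rho>) f'"
    and deriv: "\<And>y. y \<in> ball x0 \<rho> \<Longrightarrow> (f has_real_derivative f' y) (at y)"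
    using shift_relation_C1[where b = b and m = "Suc k", OF Suc.prems(2,3) \<open>b 0 \<noteq> 0\<close>]
    by blast
  obtain c e where "0 < e" and f'_poly: "\<And>y. y \<in> ball x0 e \<Longrightarrow> f' y = (\<Sum>i<k. c i * y ^ i)"
    using Suc.IH[OF _ \<open>0 < \<rho>\<close> \<open>continuous_on (ball x0 \<rho>) f'\<close>]
      derivative_differences_vanish[OF hyp deriv \<open>\<rho> \<le> r\<close>] by blast
  have "(f has_real_derivative (\<Sum>i<k. c i * y ^ i)) (at y)" if "y \<in> ball x0 (min e \<rho>)" for y
    using deriv[of y] f'_poly[of y] that by simp
  then obtain c' where "\<forall>y\<in>ball x0 (min e \<rho>). f y = (\<Sum>i<Suc k. c' i * y ^ i)"
    using polynomial_antiderivative by blast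
  moreover have "0 < min e \<rho>" using \<open>0 < e\<close> \<open>0 < \<rho>\<close> by simp
  ultimately show ?case by (intro Suc.prems(1)[of "min e \<rho>" c']) auto
qed

lemma poly_of_coefficients:
  "\<exists>p :: 'a::comm_semiring_1 poly. (p = 0 \<or> degree p < k) \<and> (\<forall>y. poly p y = (\<Sum>i<k. c i * y ^ i))"
proof (intro exI conjI allI)
  let ?p = "\<Sum>i<k. monom (c i) i"
  show "poly ?p y = (\<Sum>i<k. c i * y ^ i)" for y
    by (simp add: poly_sum poly_monom)
  show "?p = 0 \<or> degree ?p < k"
  proof (cases k)
    case (Suc k')
    have "degree ?p \<le> k'"
      by (rule degree_sum_le) (use Suc in \<open>auto intro: order_trans[OF degree_monom_le]\<close>)
    then show ?thesis using Suc by simp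
  qed simp
qed

theorem mainTheorem4:
  fixes f g h :: "real \<Rightarrow> real" and X U :: "real set" and x0 :: real and n :: nat
  assumes "balanced f g h X U"
    and "card X = n" and "n \<ge> 1"
    and "x0 \<in> X" and "h x0 \<noteq> 0"
  shows "\<exists>p :: real poly. (p = 0 \<or> degree p + 2 \<le> n) \<and>
           (\<exists>e>0. ball x0 e \<subseteq> U \<and> (\<forall>y\<in>ball x0 e. f y = poly p y))"
proof -
  obtain r where "0 < r" and "ball x0 r \<subseteq> U"
    and vanish: "\<And>y es. length es = n - 1 \<Longrightarrow> dist x0 y + (\<Sum>e\<leftarrow>es. \<bar>e\<bar>) < r \<Longrightarrow>
                   fdiff es f y = 0"
    using balanced_differences_vanish[OF assms(1,4,5)] assms(2) by blast
  have "continuous_on (ball x0 r) f"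
    using assms(1) \<open>ball x0 r \<subseteq> U\<close> by (auto simp: balanced_def intro: continuous_on_subset)
  then obtain c e where "0 < e" and f_eq: "\<And>y. y \<in> ball x0 e \<Longrightarrow> f y = (\<Sum>i<n - 1. c i * y ^ i)"
    using vanishing_differences_polynomial[OF \<open>0 < r\<close> _ vanish] by blast
  obtain p :: "real poly" where deg: "p = 0 \<or> degree p < n - 1"
    and poly_eq: "\<And>y. poly p y = (\<Sum>i<n - 1. c i * y ^ i)"
    using poly_of_coefficients by blast
  have "0 < min e r" using \<open>0 < e\<close> \<open>0 < r\<close> by simp
  moreover have "ball x0 (min e r) \<subseteq> U" using \<open>ball x0 r \<subseteq> U\<close> by auto
  moreover have "\<forall>y\<in>ball x0 (min e r). f y = poly p y" using f_eq poly_eq by simp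
  moreover have "p = 0 \<or> degree p + 2 \<le> n" using deg by linarith
  ultimately show ?thesis by blast
qed

end
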